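(* Let $s\geq 3$, let $p,q$ be coprime integers, and let $k\in G_{K_s}(p,q)$ be any element with $M=k^q$ and $L=k^{-p}$. Then $$k^{p-(4s+7)q}=l^{-1}c^{-1}l^{-s}c^{-1}l^{-s}c^{-1}l^{-1}.$$
   Context: Let $R=c\,l\,c\,l^{-1}c^{-1}l^{-s}c^{-1}l^{-1}c\,l\,c\,l^{s-1}$, $M=c$ and $L=c^{-(2s-2)}\,l\,c\,l^{s}\,c\,l^{s}\,c\,l\,c^{-(2s+9)}$. Define $G_{K_s}(p,q)=\langle c,l\mid R,\ M^pL^q\rangle$ (the fundamental group of $p/q$ surgery on the $(-2,3,2s+1)$-pretzel knot). *)

theory Defs
  imports Main
begin

text \<open>A letter is a generator together with a sign (True = positive, False = inverse).
  Equality in the presented group <c,l | Rs> is the smallest congruence on words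
  generated by free cancellation and by deleting relators (normal closure).\<close>

datatype gen = GenC | GenL

type_synonym word = "(gen \<times> bool) list"

definition inv_word :: "word \<Rightarrow> word" where
  "inv_word w = rev (map (\<lambda>(g, b). (g, \<not> b)) w)"

definition wpow :: "word \<Rightarrow> int \<Rightarrow> word" where
  "wpow w n = (if 0 \<le> n then concat (replicate (nat n) w)
               else concat (replicate (nat (- n)) (inv_word w)))"

inductive pres_eq :: "word set \<Rightarrow> word \<Rightarrow> word \<Rightarrow> bool" for Rs :: "word set" where
  refl: "pres_eq Rs w w"
| sym: "pres_eq Rs u w \<Longrightarrow> pres_eq Rs w u"
| trans: "pres_eq Rs u v \<Longrightarrow> pres_eq Rs v w \<Longrightarrow> pres_eq Rs u w"
| cancel: "pres_eq Rs (u @ [(g, b), (g, \<not> b)] @ v) (u @ v)"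
| relator: "r \<in> Rs \<Longrightarrow> pres_eq Rs (u @ r @ v) (u @ v)"

definition gc :: word where "gc = [(GenC, True)]"
definition gl :: word where "gl = [(GenL, True)]"

definition relR :: "nat \<Rightarrow> word" where
  "relR s = gc @ gl @ gc @ wpow gl (-1) @ wpow gc (-1) @ wpow gl (- int s) @ wpow gc (-1)
            @ wpow gl (-1) @ gc @ gl @ gc @ wpow gl (int s - 1)"

definition wordM :: word where "wordM = gc"

definition wordL :: "nat \<Rightarrow> word" where
  "wordL s = wpow gc (- (2 * int s - 2)) @ gl @ gc @ wpow gl (int s) @ gc @ wpow gl (int s)
             @ gc @ gl @ wpow gc (- (2 * int s + 9))"

definition GK_rels :: "nat \<Rightarrow> int \<Rightarrow> int \<Rightarrow> word set" where
  "GK_rels s p q = {relR s, wpow wordM p @ wpow (wordL s) q}"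

definition GK_eq :: "nat \<Rightarrow> int \<Rightarrow> int \<Rightarrow> word \<Rightarrow> word \<Rightarrow> bool" where
  "GK_eq s p q = pres_eq (GK_rels s p q)"

end

theory Submission
  imports Defs
begin

(* Writing a = 2s+9, b = 2s-2 and
   W = l^-1 c^-1 l^-s c^-1 l^-s c^-1 l^-1, the word L is by definition c^-b W^-1 c^-a,
   so L^-1 = c^a W c^b as words.  From c = k^q and L = k^-p one gets
     k^(p - (a+b) q) = k^(-aq) k^p k^(-bq) = c^-a L^-1 c^-b = c^-a c^a W c^b c^-b = W,
   and a + b = 4s + 7.
   The file first shows that equality in a presented group (pres_eq Rs) is a congruence
   for concatenation and inversion, then proves the exponent laws for the integer
   powers wpow (addition, multiplication, compatibility with the congruence). *)

declare pres_eq.trans [trans]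

lemma pres_eq_context:
  assumes "pres_eq Rs u v"
  shows "pres_eq Rs (x @ u @ y) (x @ v @ y)"
  using assms
proof (induction rule: pres_eq.induct)
  case (refl w)
  show ?case by (rule pres_eq.refl)
next
  case (sym u w)
  show ?case by (rule pres_eq.sym[OF sym.IH])
next
  case (trans u v w)
  show ?case by (rule pres_eq.trans[OF trans.IH])
next
  case (cancel u g b v)
  have "pres_eq Rs ((x @ u) @ [(g, b), (g, \<not> b)] @ (v @ y)) ((x @ u) @ (v @ y))"
    by (rule pres_eq.cancel)
  then show ?case by simp
next
  case (relator r u v)
  have "pres_eq Rs ((x @ u) @ r @ (v @ y)) ((x @ u) @ (v @ y))"
    using relator by (rule pres_eq.relator)
  then show ?case by simp
qed

lemma pres_eq_append:
  assumes "pres_eq Rs u u'" and "pres_eq Rs v v'"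
  shows "pres_eq Rs (u @ v) (u' @ v')"
proof -
  have "pres_eq Rs (u @ v) (u' @ v)"
    using pres_eq_context[OF assms(1), of "[]" v] by simp
  moreover have "pres_eq Rs (u' @ v) (u' @ v')"
    using pres_eq_context[OF assms(2), of u' "[]"] by simp
  ultimately show ?thesis by (rule pres_eq.trans)
qed

lemma inv_word_Nil [simp]: "inv_word [] = []"
  by (simp add: inv_word_def)

lemma inv_word_append [simp]: "inv_word (u @ v) = inv_word v @ inv_word u"
  by (simp add: inv_word_def)

lemma inv_word_involution [simp]: "inv_word (inv_word u) = u"
  by (induction u) (auto simp: inv_word_def)

lemma concat_replicate_commute: "concat (replicate n w) @ w = w @ concat (replicate n w)"
  by (induction n) auto

lemma inv_word_concat_replicate [simp]:
  "inv_word (concat (replicate n w)) = concat (replicate n (inv_word w))"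
  by (induction n) (auto simp: concat_replicate_commute)

lemma inv_word_wpow [simp]: "inv_word (wpow w n) = wpow w (- n)"
  by (auto simp: wpow_def)

lemma wpow_0 [simp]: "wpow w 0 = []"
  by (simp add: wpow_def)

lemma pres_eq_right_inverse: "pres_eq Rs (w @ inv_word w) []"
proof (induction w)
  case Nil
  show ?case by (simp add: pres_eq.refl)
next
  case (Cons x w)
  obtain g b where x: "x = (g, b)" by force
  have "pres_eq Rs ([(g, b)] @ (w @ inv_word w) @ [(g, \<not> b)]) ([(g, b)] @ [] @ [(g, \<not> b)])"
    using pres_eq_context[OF Cons.IH] by blast
  moreover have "pres_eq Rs ([] @ [(g, b), (g, \<not> b)] @ []) ([] @ [])"
    by (rule pres_eq.cancel)
  ultimately show ?case
    using x by (auto simp: inv_word_def intro: pres_eq.trans)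
qed

lemma pres_eq_left_inverse: "pres_eq Rs (inv_word w @ w) []"
  using pres_eq_right_inverse[of Rs "inv_word w"] by simp

text \<open>Inversion in the presented group is well defined:
  u^-1 = u^-1 v v^-1 = u^-1 u v^-1 = v^-1.\<close>
lemma pres_eq_inv_word:
  assumes "pres_eq Rs u v"
  shows "pres_eq Rs (inv_word u) (inv_word v)"
proof -
  have "pres_eq Rs (inv_word u) (inv_word u @ v @ inv_word v)"
    using pres_eq_append[OF pres_eq.refl pres_eq_right_inverse, of Rs "inv_word u" v]
    by (simp add: pres_eq.sym)
  also have "pres_eq Rs \<dots> ((inv_word u @ u) @ inv_word v)"
    using pres_eq_context[OF pres_eq.sym[OF assms], of "inv_word u" "inv_word v"] by simp
  also have "pres_eq Rs \<dots> ([] @ inv_word v)"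
    by (rule pres_eq_append[OF pres_eq_left_inverse pres_eq.refl])
  finally show ?thesis by simp
qed

lemma wpow_succ: "pres_eq Rs (wpow w (n + 1)) (wpow w n @ w)"
proof (cases "n \<ge> 0")
  case True
  then have "nat (n + 1) = Suc (nat n)" by simp
  with True show ?thesis
    by (simp add: wpow_def replicate_append_same[symmetric] pres_eq.refl
        del: replicate_append_same)
next
  case False
  then have "nat (- n) = Suc (nat (- (n + 1)))" by simp
  with False have split: "wpow w n = wpow w (n + 1) @ inv_word w"
    by (simp add: wpow_def replicate_append_same[symmetric] del: replicate_append_same)
  have "pres_eq Rs (wpow w (n + 1) @ (inv_word w @ w)) (wpow w (n + 1) @ [])"
    by (rule pres_eq_append[OF pres_eq.refl pres_eq_left_inverse])
  then show ?thesis using split by (simp add: pres_eq.sym)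
qed

lemma wpow_pred: "pres_eq Rs (wpow w (n - 1)) (wpow w n @ inv_word w)"
proof -
  have "pres_eq Rs (wpow w (n - 1)) (wpow w (n - 1) @ w @ inv_word w)"
    using pres_eq_append[OF pres_eq.refl pres_eq_right_inverse, of Rs "wpow w (n - 1)" w]
    by (simp add: pres_eq.sym)
  also have "pres_eq Rs \<dots> (wpow w n @ inv_word w)"
    using pres_eq_append[OF pres_eq.sym[OF wpow_succ[of Rs w "n - 1"]] pres_eq.refl] by simp
  finally show ?thesis .
qed

lemma wpow_add: "pres_eq Rs (wpow w (m + n)) (wpow w m @ wpow w n)"
proof (induction n rule: int_induct[where k = 0])
  case base
  show ?case by (simp add: pres_eq.refl)
next
  case (step1 n)
  have "pres_eq Rs (wpow w (m + (n + 1))) (wpow w (m + n) @ w)"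
    using wpow_succ[of Rs w "m + n"] by (simp add: add.assoc)
  also have "pres_eq Rs \<dots> (wpow w m @ wpow w n @ w)"
    using pres_eq_append[OF step1.IH pres_eq.refl] by simp
  also have "pres_eq Rs \<dots> (wpow w m @ wpow w (n + 1))"
    by (rule pres_eq_append[OF pres_eq.refl pres_eq.sym[OF wpow_succ]])
  finally show ?case .
next
  case (step2 n)
  have "pres_eq Rs (wpow w (m + (n - 1))) (wpow w (m + n) @ inv_word w)"
    using wpow_pred[of Rs w "m + n"] by (simp add: add_diff_eq)
  also have "pres_eq Rs \<dots> (wpow w m @ wpow w n @ inv_word w)"
    using pres_eq_append[OF step2.IH pres_eq.refl] by simp
  also have "pres_eq Rs \<dots> (wpow w m @ wpow w (n - 1))"
    by (rule pres_eq_append[OF pres_eq.refl pres_eq.sym[OF wpow_pred]])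
  finally show ?case .
qed

lemma wpow_cong:
  assumes "pres_eq Rs u v"
  shows "pres_eq Rs (wpow u n) (wpow v n)"
proof -
  have rep: "pres_eq Rs (concat (replicate m x)) (concat (replicate m y))"
    if "pres_eq Rs x y" for m x y
    using that by (induction m) (auto intro: pres_eq_append pres_eq.refl)
  show ?thesis
    using rep[OF assms] rep[OF pres_eq_inv_word[OF assms]] by (simp add: wpow_def)
qed

lemma wpow_mult: "pres_eq Rs (wpow (wpow k q) n) (wpow k (q * n))"
proof (induction n rule: int_induct[where k = 0])
  case base
  show ?case by (simp add: pres_eq.refl)
next
  case (step1 n)
  have "pres_eq Rs (wpow (wpow k q) (n + 1)) (wpow (wpow k q) n @ wpow k q)"
    by (rule wpow_succ)
  also have "pres_eq Rs \<dots> (wpow k (q * n) @ wpow k q)"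
    by (rule pres_eq_append[OF step1.IH pres_eq.refl])
  also have "pres_eq Rs \<dots> (wpow k (q * (n + 1)))"
    using pres_eq.sym[OF wpow_add[of Rs k "q * n" q]] by (simp add: distrib_left)
  finally show ?case .
next
  case (step2 n)
  have "pres_eq Rs (wpow (wpow k q) (n - 1)) (wpow (wpow k q) n @ wpow k (- q))"
    using wpow_pred[of Rs "wpow k q" n] by simp
  also have "pres_eq Rs \<dots> (wpow k (q * n) @ wpow k (- q))"
    by (rule pres_eq_append[OF step2.IH pres_eq.refl])
  also have "pres_eq Rs \<dots> (wpow k (q * (n - 1)))"
    using pres_eq.sym[OF wpow_add[of Rs k "q * n" "- q"]] by (simp add: right_diff_distrib)
  finally show ?case .
qed

lemma wpow_cancel_around:
  "pres_eq Rs (wpow c (- a) @ (wpow c a @ W @ wpow c b) @ wpow c (- b)) W"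
proof -
  have left: "pres_eq Rs (wpow c (- a) @ wpow c a) []"
    using pres_eq.sym[OF wpow_add[of Rs c "- a" a]] by simp
  have right: "pres_eq Rs (wpow c b @ wpow c (- b)) []"
    using pres_eq.sym[OF wpow_add[of Rs c b "- b"]] by simp
  have "pres_eq Rs ((wpow c (- a) @ wpow c a) @ W @ (wpow c b @ wpow c (- b))) ([] @ W @ [])"
    by (rule pres_eq_append[OF left pres_eq_append[OF pres_eq.refl right]])
  then show ?thesis by simp
qed

lemma common_root_power:
  assumes c: "pres_eq Rs c (wpow k q)" and L: "pres_eq Rs L (wpow k (- p))"
  shows "pres_eq Rs (wpow k (p - (a + b) * q)) (wpow c (- a) @ inv_word L @ wpow c (- b))"
proof -
  have exps: "p - (a + b) * q = q * (- a) + (p + q * (- b))"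
    by (simp add: algebra_simps)
  have power_a: "pres_eq Rs (wpow k (q * (- a))) (wpow c (- a))"
    using pres_eq.trans[OF pres_eq.sym[OF wpow_mult] pres_eq.sym[OF wpow_cong[OF c]]] .
  have power_b: "pres_eq Rs (wpow k (q * (- b))) (wpow c (- b))"
    using pres_eq.trans[OF pres_eq.sym[OF wpow_mult] pres_eq.sym[OF wpow_cong[OF c]]] .
  have power_p: "pres_eq Rs (wpow k p) (inv_word L)"
    using pres_eq.sym[OF pres_eq_inv_word[OF L]] by simp
  have "pres_eq Rs (wpow k (p - (a + b) * q))
          (wpow k (q * (- a)) @ wpow k p @ wpow k (q * (- b)))"
    unfolding exps
    by (rule pres_eq.trans[OF wpow_add pres_eq_append[OF pres_eq.refl wpow_add]])
  also have "pres_eq Rs \<dots> (wpow c (- a) @ inv_word L @ wpow c (- b))"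
    by (rule pres_eq_append[OF power_a pres_eq_append[OF power_p power_b]])
  finally show ?thesis .
qed

lemma inv_wordL:
  "inv_word (wordL s) = wpow gc (2 * int s + 9) @
     (wpow gl (-1) @ wpow gc (-1) @ wpow gl (- int s) @ wpow gc (-1)
      @ wpow gl (- int s) @ wpow gc (-1) @ wpow gl (-1)) @ wpow gc (2 * int s - 2)"
proof -
  have "inv_word gc = wpow gc (-1)" "inv_word gl = wpow gl (-1)"
    by (simp_all add: wpow_def)
  then show ?thesis
    unfolding wordL_def by (simp only: inv_word_append inv_word_wpow append_assoc) (simp add: add.commute)
qed

theorem fact3p2:
  fixes s :: nat and p q :: int and k :: word
  assumes "s \<ge> 3"
    and "coprime p q"
    and "GK_eq s p q wordM (wpow k q)"
    and "GK_eq s p q (wordL s) (wpow k (- p))"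
  shows "GK_eq s p q (wpow k (p - (4 * int s + 7) * q))
           (wpow gl (-1) @ wpow gc (-1) @ wpow gl (- int s) @ wpow gc (-1)
            @ wpow gl (- int s) @ wpow gc (-1) @ wpow gl (-1))"
proof -
  define W where "W = wpow gl (-1) @ wpow gc (-1) @ wpow gl (- int s) @ wpow gc (-1)
            @ wpow gl (- int s) @ wpow gc (-1) @ wpow gl (-1)"
  define a where "a = 2 * int s + 9"
  define b where "b = 2 * int s - 2"
  have c: "GK_eq s p q gc (wpow k q)" and L: "GK_eq s p q (wordL s) (wpow k (- p))"
    using assms(3,4) by (simp_all add: wordM_def)
  have "GK_eq s p q (wpow k (p - (a + b) * q))
          (wpow gc (- a) @ (wpow gc a @ W @ wpow gc b) @ wpow gc (- b))"
    using common_root_power[OF c[unfolded GK_eq_def] L[unfolded GK_eq_def], of a b]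
    by (simp add: GK_eq_def inv_wordL a_def b_def W_def)
  then have "GK_eq s p q (wpow k (p - (a + b) * q)) W"
    unfolding GK_eq_def using wpow_cancel_around by (rule pres_eq.trans)
  moreover have "a + b = 4 * int s + 7"
    by (simp add: a_def b_def)
  ultimately show ?thesis by (simp add: W_def)
qed

end
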